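(* Let $\mathcal{H}$ be a separable Hilbert space with inner product $\langle\cdot,\cdot\rangle$ (linear in the second argument), and let $\mathcal{F}_\varphi=\{\varphi_n\}_{n\ge0}$ be a (Schauder) basis of $\mathcal{H}$ with biorthogonal basis $\mathcal{F}_\psi=\{\psi_n\}_{n\ge0}$, $\langle\varphi_n,\psi_k\rangle=\delta_{n,k}$, with $\varphi_n,\psi_n\in\mathcal{D}$ for a dense subspace $\mathcal{D}$. Let $H$ be an operator with $D(H),D(H^\dagger)\supseteq\mathcal{D}$, let $\{\Phi_n\}_{n\ge0}$ satisfy $H\Phi_n=E_n\Phi_n$ and $\{\eta_n\}_{n\ge0}$ satisfy $H^\dagger\eta_n=\overline{E_n}\eta_n$, and put $c_k^{(n)}=\langle\psi_k,\Phi_n\rangle$ (so $\Phi_n=\sum_k c_k^{(n)}\varphi_k$) and $d_k^{(n)}=\langle\varphi_k,\eta_n\rangle$ (so $\eta_n=\sum_k d_k^{(n)}\psi_k$). Then (i) $\sum_k\overline{c_k^{(n)}}\,d_k^{(m)}=\langle\Phi_n,\eta_m\rangle$ for all $n,m$, and this equals $\delta_{n,m}$ if each eigenvalue of $H$ has multiplicity one (the $E_n$ are pairwise distinct) and the normalizations are chosen so that $\langle\Phi_n,\eta_n\rangle=1$ for all $n$; (ii) if $\{\Phi_n\}$ and $\{\eta_n\}$ are $\mathcal{D}$-quasi bases, then $\sum_n\overline{c_k^{(n)}}\,d_l^{(n)}=\delta_{k,l}$ for all $k,l\ge0$.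
   Context: Two families $\{f_n\}$, $\{g_n\}$ are called $\mathcal{D}$-quasi bases if for all $f,g\in\mathcal{D}$: $\langle f,g\rangle=\sum_{n\ge0}\langle f,f_n\rangle\langle g_n,g\rangle=\sum_{n\ge0}\langle f,g_n\rangle\langle f_n,g\rangle$. *)

theory Defs
  imports "HOL-Analysis.Analysis"
begin

text \<open>The distribution has no complex inner product spaces, so we introduce them as a
type class: a real inner product space with a complex scalar multiplication extending the
real one and a complex inner product (linear in the second argument) whose real part is the
real inner product. The induced norm and topology are then those of the library.\<close>

class complex_inner = real_inner +
  fixes scaleC :: "complex \<Rightarrow> 'a \<Rightarrow> 'a" (infixr \<open>*\<^sub>C\<close> 75)
    and cinner :: "'a \<Rightarrow> 'a \<Rightarrow> complex"
  assumes scaleC_add_right: "a *\<^sub>C (x + y) = a *\<^sub>C x + a *\<^sub>C y"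
    and scaleC_add_left: "(a + b) *\<^sub>C x = a *\<^sub>C x + b *\<^sub>C x"
    and scaleC_scaleC: "a *\<^sub>C (b *\<^sub>C x) = (a * b) *\<^sub>C x"
    and scaleC_one: "1 *\<^sub>C x = x"
    and scaleR_scaleC: "scaleR r x = complex_of_real r *\<^sub>C x"
    and cinner_add_right: "cinner x (y + z) = cinner x y + cinner x z"
    and cinner_scaleC_right: "cinner x (a *\<^sub>C y) = a * cinner x y"
    and cinner_commute: "cinner y x = cnj (cinner x y)"
    and inner_cinner: "inner x y = Re (cinner x y)"

class chilbert = complex_inner + complete_space

definition separable_space :: "'a::topological_space itself \<Rightarrow> bool" where
  "separable_space _ \<longleftrightarrow> (\<exists>S::'a set. countable S \<and> closure S = UNIV)"

definition csubspace :: "'a::complex_inner set \<Rightarrow> bool" where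
  "csubspace S \<longleftrightarrow> 0 \<in> S \<and> (\<forall>x\<in>S. \<forall>y\<in>S. x + y \<in> S) \<and> (\<forall>a x. x \<in> S \<longrightarrow> a *\<^sub>C x \<in> S)"

definition dense_csubspace :: "'a::complex_inner set \<Rightarrow> bool" where
  "dense_csubspace S \<longleftrightarrow> csubspace S \<and> closure S = UNIV"

definition schauder_basis :: "(nat \<Rightarrow> 'a::complex_inner) \<Rightarrow> bool" where
  "schauder_basis f \<longleftrightarrow> (\<forall>x. \<exists>!a. (\<lambda>k. a k *\<^sub>C f k) sums x)"

definition biorthogonal :: "(nat \<Rightarrow> 'a::complex_inner) \<Rightarrow> (nat \<Rightarrow> 'a) \<Rightarrow> bool" where
  "biorthogonal f g \<longleftrightarrow> (\<forall>n k. cinner (f n) (g k) = (if n = k then 1 else 0))"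

definition linear_operator :: "('a::complex_inner \<Rightarrow> 'a) \<Rightarrow> 'a set \<Rightarrow> bool" where
  "linear_operator H DH \<longleftrightarrow> csubspace DH \<and>
     (\<forall>x\<in>DH. \<forall>y\<in>DH. H (x + y) = H x + H y) \<and> (\<forall>a. \<forall>x\<in>DH. H (a *\<^sub>C x) = a *\<^sub>C H x)"

definition is_adjoint :: "('a::complex_inner \<Rightarrow> 'a) \<Rightarrow> 'a set \<Rightarrow> ('a \<Rightarrow> 'a) \<Rightarrow> 'a set \<Rightarrow> bool" where
  "is_adjoint H DH Hd DHd \<longleftrightarrow>
     DHd = {y. \<exists>z. \<forall>x\<in>DH. cinner y (H x) = cinner z x} \<and>
     (\<forall>y\<in>DHd. \<forall>x\<in>DH. cinner y (H x) = cinner (Hd y) x)"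

definition quasi_bases :: "'a::complex_inner set \<Rightarrow> (nat \<Rightarrow> 'a) \<Rightarrow> (nat \<Rightarrow> 'a) \<Rightarrow> bool" where
  "quasi_bases D f g \<longleftrightarrow> (\<forall>x\<in>D. \<forall>y\<in>D.
      (\<lambda>n. cinner x (f n) * cinner (g n) y) sums cinner x y \<and>
      (\<lambda>n. cinner x (g n) * cinner (f n) y) sums cinner x y)"

end

theory Submission
  imports Defs
begin

text \<open>Both series are inner products written in coordinates. Biorthogonality identifies the
coefficients of \<open>\<Phi>\<^sub>n\<close> in the basis \<open>\<phi>\<close> as \<open>c\<^sub>k\<^sup>(\<^sup>n\<^sup>)\<close>, and continuity of the inner product
turns the expansion of \<open>\<Phi>\<^sub>n\<close> into the series for \<open>\<langle>\<Phi>\<^sub>n, \<eta>\<^sub>m\<rangle>\<close>. Since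
\<open>E\<^sub>n\<langle>\<eta>\<^sub>m, \<Phi>\<^sub>n\<rangle> = \<langle>\<eta>\<^sub>m, H\<Phi>\<^sub>n\<rangle> = \<langle>H\<^sup>\<dagger>\<eta>\<^sub>m, \<Phi>\<^sub>n\<rangle> = E\<^sub>m\<langle>\<eta>\<^sub>m, \<Phi>\<^sub>n\<rangle>\<close>, distinct eigenvalues
give orthogonality. Finally (ii) is the conjugate of the quasi-basis identity for the pair
\<open>\<psi>\<^sub>k, \<phi>\<^sub>l\<close> of vectors of \<open>\<D>\<close>, whose inner product is \<open>\<delta>\<^sub>k\<^sub>,\<^sub>l\<close>.\<close>

lemma cinner_scaleC_left: "cinner (a *\<^sub>C x) (y::'a::complex_inner) = cnj a * cinner x y"
  by (metis cinner_commute cinner_scaleC_right complex_cnj_mult)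

lemma cnj_cinner: "cnj (cinner x (y::'a::complex_inner)) = cinner y x"
  by (simp add: cinner_commute[of y x])

lemma norm_scaleC: "norm (a *\<^sub>C (x::'a::complex_inner)) = cmod a * norm x"
proof -
  have "(norm (a *\<^sub>C x))\<^sup>2 = Re (cinner (a *\<^sub>C x) (a *\<^sub>C x))"
    by (simp add: power2_norm_eq_inner inner_cinner)
  also have "\<dots> = Re ((cnj a * a) * cinner x x)"
    by (simp only: cinner_scaleC_left cinner_scaleC_right mult.assoc mult.left_commute)
  also have "cnj a * a = complex_of_real ((cmod a)\<^sup>2)"
    by (metis complex_norm_square mult.commute of_real_power)
  finally have "(norm (a *\<^sub>C x))\<^sup>2 = (cmod a * norm x)\<^sup>2"
    by (simp add: power2_norm_eq_inner inner_cinner power_mult_distrib)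
  then show ?thesis by (simp add: power2_eq_iff_nonneg)
qed

text \<open>Rotating \<open>y\<close> by a unit scalar makes \<open>\<langle>x, y\<rangle>\<close> real and nonnegative, so the real
Cauchy-Schwarz inequality applies.\<close>
lemma cinner_norm_le: "cmod (cinner x (y::'a::complex_inner)) \<le> norm x * norm y"
proof (cases "cinner x y = 0")
  case True
  then show ?thesis by simp
next
  case False
  define w where "w = cinner x y"
  define a where "a = cnj w / complex_of_real (cmod w)"
  have "cmod w \<noteq> 0" using False by (simp add: w_def)
  then have unit: "cmod a = 1" by (simp add: a_def norm_divide)
  have "cinner x (a *\<^sub>C y) = (cnj w * w) / complex_of_real (cmod w)"
    by (simp add: cinner_scaleC_right w_def a_def)
  also have "cnj w * w = complex_of_real (cmod w) * complex_of_real (cmod w)"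
    by (metis complex_norm_square mult.commute of_real_mult power2_eq_square)
  also have "\<dots> / complex_of_real (cmod w) = complex_of_real (cmod w)"
    using \<open>cmod w \<noteq> 0\<close> by simp
  finally have "cmod w = inner x (a *\<^sub>C y)" by (simp add: inner_cinner)
  also have "\<dots> \<le> norm x * norm (a *\<^sub>C y)" by (rule norm_cauchy_schwarz)
  finally show ?thesis by (simp add: norm_scaleC unit w_def)
qed

lemma bounded_linear_cinner_right: "bounded_linear (cinner (x::'a::complex_inner))"
proof (rule bounded_linear_intro[where K = "norm x"])
  show "cinner x (y + z) = cinner x y + cinner x z" for y z by (rule cinner_add_right)
  show "cinner x (r *\<^sub>R y) = r *\<^sub>R cinner x y" for r y
    by (simp add: scaleR_scaleC cinner_scaleC_right scaleR_conv_of_real)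
  show "norm (cinner x y) \<le> norm y * norm x" for y
    using cinner_norm_le[of x y] by (simp add: mult.commute)
qed

lemma sums_cinner_right:
  "f sums y \<Longrightarrow> (\<lambda>k. cinner x (f k)) sums cinner x (y::'a::complex_inner)"
  by (rule bounded_linear.sums[OF bounded_linear_cinner_right])

lemma sums_cinner_left:
  assumes "f sums x"
  shows "(\<lambda>k. cinner (f k) y) sums cinner (x::'a::complex_inner) y"
  using sums_cnj[THEN iffD2, OF sums_cinner_right[OF assms, of y]] by (simp add: cnj_cinner)

lemma biorthogonal_cinner_swap:
  "biorthogonal f g \<Longrightarrow> cinner (g k) (f n) = (if n = k then 1 else 0)"
  by (metis biorthogonal_def cnj_cinner complex_cnj_one complex_cnj_zero)

lemma schauder_basis_biorthogonal_expansion: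
  assumes basis: "schauder_basis f" and biorth: "biorthogonal f g"
  shows "(\<lambda>k. cinner (g k) x *\<^sub>C f k) sums x"
proof -
  obtain a where a: "(\<lambda>k. a k *\<^sub>C f k) sums x"
    using basis unfolding schauder_basis_def by blast
  have "a j = cinner (g j) x" for j
  proof -
    have "(\<lambda>k. cinner (g j) (a k *\<^sub>C f k)) sums cinner (g j) x"
      using sums_cinner_right[OF a] .
    moreover have "(\<lambda>k. cinner (g j) (a k *\<^sub>C f k)) = (\<lambda>k. if k = j then a j else 0)"
      by (auto simp: cinner_scaleC_right biorthogonal_cinner_swap[OF biorth])
    ultimately have "(\<lambda>k. if k = j then a j else 0) sums cinner (g j) x" by simp
    with sums_single[of j "\<lambda>_. a j"] show ?thesis by (rule sums_unique2)
  qed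
  then show ?thesis using a by simp
qed

lemma biorthogonal_cinner_series:
  assumes "schauder_basis f" and "biorthogonal f g"
  shows "(\<lambda>k. cnj (cinner (g k) x) * cinner (f k) y) sums cinner x (y::'a::complex_inner)"
  using sums_cinner_left[OF schauder_basis_biorthogonal_expansion[OF assms, of x], of y]
  by (simp add: cinner_scaleC_left)

lemma adjoint_eigenvectors_orthogonal:
  assumes adj: "is_adjoint H DH Hd DHd"
    and x: "x \<in> DH" "H x = a *\<^sub>C x"
    and y: "y \<in> DHd" "Hd y = cnj b *\<^sub>C y"
    and "a \<noteq> b"
  shows "cinner x y = 0"
proof -
  have "cinner y (H x) = cinner (Hd y) x"
    using adj x(1) y(1) unfolding is_adjoint_def by blast
  then have "a * cinner y x = b * cinner y x"
    by (simp add: x(2) y(2) cinner_scaleC_right cinner_scaleC_left)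
  then have "cinner y x = 0" using \<open>a \<noteq> b\<close> by simp
  then show ?thesis by (metis cnj_cinner complex_cnj_zero)
qed

lemma quasi_bases_cnj_series:
  assumes "quasi_bases D f g" and "x \<in> D" and "y \<in> D"
  shows "(\<lambda>n. cnj (cinner x (f n)) * cinner y (g n)) sums cinner y x"
proof -
  have "(\<lambda>n. cinner x (f n) * cinner (g n) y) sums cinner x y"
    using assms unfolding quasi_bases_def by blast
  from sums_cnj[THEN iffD2, OF this] show ?thesis by (simp add: cnj_cinner)
qed

theorem proposition4:
  fixes \<phi> \<psi> \<Phi> \<eta> :: "nat \<Rightarrow> 'a::chilbert"
    and D DH DHd :: "'a set"
    and H Hd :: "'a \<Rightarrow> 'a"
    and E :: "nat \<Rightarrow> complex"
    and c d :: "nat \<Rightarrow> nat \<Rightarrow> complex"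
  assumes sep: "separable_space TYPE('a)"
    and basis_phi: "schauder_basis \<phi>"
    and basis_psi: "schauder_basis \<psi>"
    and biorth: "biorthogonal \<phi> \<psi>"
    and D: "dense_csubspace D"
    and phi_D: "\<And>n. \<phi> n \<in> D" and psi_D: "\<And>n. \<psi> n \<in> D"
    and H_op: "linear_operator H DH"
    and adj: "is_adjoint H DH Hd DHd"
    and D_DH: "D \<subseteq> DH" and D_DHd: "D \<subseteq> DHd"
    and eig_H: "\<And>n. \<Phi> n \<in> DH \<and> H (\<Phi> n) = E n *\<^sub>C \<Phi> n"
    and eig_Hd: "\<And>n. \<eta> n \<in> DHd \<and> Hd (\<eta> n) = cnj (E n) *\<^sub>C \<eta> n"
    and c_def: "\<And>k n. c k n = cinner (\<psi> k) (\<Phi> n)"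
    and d_def: "\<And>k n. d k n = cinner (\<phi> k) (\<eta> n)"
  shows "(\<forall>n m. (\<lambda>k. cnj (c k n) * d k m) sums cinner (\<Phi> n) (\<eta> m))
    \<and> ((inj E \<and> (\<forall>n. cinner (\<Phi> n) (\<eta> n) = 1)) \<longrightarrow>
         (\<forall>n m. cinner (\<Phi> n) (\<eta> m) = (if n = m then 1 else 0)))
    \<and> (quasi_bases D \<Phi> \<eta> \<longrightarrow>
         (\<forall>k l. (\<lambda>n. cnj (c k n) * d l n) sums (if k = l then 1 else 0)))"
proof (intro conjI impI allI)
  show "(\<lambda>k. cnj (c k n) * d k m) sums cinner (\<Phi> n) (\<eta> m)" for n m
    using biorthogonal_cinner_series[OF basis_phi biorth] by (simp add: c_def d_def)
  show "cinner (\<Phi> n) (\<eta> m) = (if n = m then 1 else 0)"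
    if normalized: "inj E \<and> (\<forall>n. cinner (\<Phi> n) (\<eta> n) = 1)" for n m
  proof (cases "n = m")
    case False
    then have "E n \<noteq> E m" using normalized by (auto dest: injD)
    with adjoint_eigenvectors_orthogonal[OF adj] eig_H eig_Hd False show ?thesis by simp
  qed (use normalized in simp)
  show "(\<lambda>n. cnj (c k n) * d l n) sums (if k = l then 1 else 0)"
    if "quasi_bases D \<Phi> \<eta>" for k l
    using quasi_bases_cnj_series[OF that psi_D[of k] phi_D[of l]] biorth
    by (auto simp: c_def d_def biorthogonal_def)
qed

end
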